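(* Let $M(z)=\frac{1-z-\sqrt{1-2z-3z^2}}{2z^2}$ be the Motzkin generating function and let $v=v(z)=zM(z)$, so that $v$ is the power series with $v(0)=0$ satisfying $z=\frac{v}{1+v+v^2}$. Define formal power series $G_k(z)$, $k\ge1$, by $G_1=z$ and $$G_{k+1}=\frac{z}{1-\dfrac{zG_k}{1-G_k}}\qquad (k\ge1),$$ and set $F_k=\frac{zG_k}{1-G_k}$. Then for all $k\ge1$, $$G_k=\frac{v}{1+v}\cdot\frac{1-v^{2k}}{1-v^{2k+1}},\qquad F_k=\frac{v^2}{1+v+v^2}\cdot\frac{1-v^{2k}}{1-v^{2k+2}}.$$ Moreover, $F_k$ is the generating function, by number of nodes, of plane trees with at least two nodes in which every leaf lies at odd depth and whose height (maximal depth of a node) is at most $2k-1$.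
   Context: Plane trees are ordered rooted trees; depth of the root is $0$; the height of a tree is the maximal depth of its nodes (number of edges on a longest root-to-node path). Power series are in the variable $z$ marking the number of nodes. *)

theory Defs
  imports "HOL-Computational_Algebra.Formal_Power_Series"
begin

definition vser :: "real fps" where
  "vser = (THE v. fps_nth v 0 = 0 \<and> fps_X = v / (1 + v + v\<^sup>2))"

text \<open>G_1 = z, G_{k+1} = z / (1 - z G_k/(1 - G_k)); G 0 is an unused filler value.\<close>
fun Gser :: "nat \<Rightarrow> real fps" where
  "Gser 0 = 0"
| "Gser (Suc 0) = fps_X"
| "Gser (Suc (Suc k)) = fps_X / (1 - fps_X * Gser (Suc k) / (1 - Gser (Suc k)))"

definition Fser :: "nat \<Rightarrow> real fps" where
  "Fser k = fps_X * Gser k / (1 - Gser k)"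

datatype ptree = Node "ptree list"

fun nodes :: "ptree \<Rightarrow> nat" where
  "nodes (Node ts) = Suc (sum_list (map nodes ts))"

fun height :: "ptree \<Rightarrow> nat" where
  "height (Node ts) = (if ts = [] then 0 else Suc (Max (set (map height ts))))"

fun odd_leaves :: "nat \<Rightarrow> ptree \<Rightarrow> bool" where
  "odd_leaves d (Node ts) = (if ts = [] then odd d else list_all (odd_leaves (Suc d)) ts)"

end

theory Submission
  imports Defs "HOL-Computational_Algebra.Formal_Laurent_Series"
begin

text \<open>
  Since \<open>v\<close> has zero constant term, every denominator below is a unit, so all identities can be
  checked in the field of formal Laurent series. There the substitution \<open>z = v / (1 + v + v\<^sup>2)\<close>
  turns the recursion for \<open>G\<^sub>k\<close> into a Moebius map which multiplies the parameter
  \<open>p = v\<^sup>2\<^sup>k\<close> of the claimed closed form by \<open>v\<^sup>2\<close>.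

  Cutting a tree at its root, the subtrees of a tree all of whose leaves are at odd depth have
  all their leaves at even depth, and vice versa. With \<open>g\<close> the generating function of the
  even-leaf trees of height \<open>< h\<close>, the odd-leaf trees of height \<open>< h + 1\<close> (non-empty forests of
  the former under a root) thus have generating function \<open>z (1/(1 - g) - 1) = z g/(1 - g)\<close>, while
  even-leaf trees of height \<open>< h + 1\<close> have \<open>z/(1 - f)\<close> where \<open>f\<close> counts odd-leaf trees of
  height \<open>< h\<close>. These are exactly the recursions defining \<open>F\<^sub>k\<close> and \<open>G\<^sub>k\<^sub>+\<^sub>1\<close>.
\<close>

lemma fps_to_fls_divide_unit:
  fixes f g :: "'a::field fps"
  assumes "g $ 0 \<noteq> 0"
  shows "fps_to_fls (f / g) = fps_to_fls f / fps_to_fls g"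
  using assms by (simp add: fls_divide_fps_to_fls subdegree_eq_0)

lemma motzkin_step:
  fixes v p :: "'a::field"
  assumes "1 + v \<noteq> 0" "1 + v + v\<^sup>2 \<noteq> 0"
    and "1 - v * p \<noteq> 0" "1 - v\<^sup>2 * p \<noteq> 0" "1 - v^3 * p \<noteq> 0"
  defines "x \<equiv> v / (1 + v + v\<^sup>2)" and "g \<equiv> v / (1 + v) * ((1 - p) / (1 - v * p))"
  shows "x * g / (1 - g) = v\<^sup>2 / (1 + v + v\<^sup>2) * ((1 - p) / (1 - v\<^sup>2 * p))"
    and "x / (1 - x * g / (1 - g)) = v / (1 + v) * ((1 - v\<^sup>2 * p) / (1 - v^3 * p))"
proof -
  define a b c d e where "a = 1 + v" and "b = 1 + v + v\<^sup>2"
    and "c = 1 - v * p" and "d = 1 - v\<^sup>2 * p" and "e = 1 - v^3 * p"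
  have nz: "a \<noteq> 0" "b \<noteq> 0" "c \<noteq> 0" "d \<noteq> 0" "e \<noteq> 0"
    using assms(1-5) unfolding a_def b_def c_def d_def e_def by auto
  have x: "x = v / b" and g: "g = v / a * ((1 - p) / c)"
    unfolding x_def g_def a_def b_def c_def by simp_all
  have "a * c - v * (1 - p) = d" "b * d - v\<^sup>2 * (1 - p) = a * e"
    unfolding a_def b_def c_def d_def e_def
    by (simp_all add: algebra_simps power2_eq_square power3_eq_cube)
  then have "1 - g = d / (a * c)" and F_ae: "1 - v\<^sup>2 / b * ((1 - p) / d) = a * e / (b * d)"
    using nz unfolding g by (simp_all add: field_simps)
  then have F: "x * g / (1 - g) = v\<^sup>2 / b * ((1 - p) / d)"
    using nz unfolding x g by (simp add: field_simps power2_eq_square)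
  then show "x * g / (1 - g) = v\<^sup>2 / (1 + v + v\<^sup>2) * ((1 - p) / (1 - v\<^sup>2 * p))"
    unfolding b_def d_def .
  have "x / (1 - x * g / (1 - g)) = v / a * (d / e)"
    unfolding F F_ae using nz unfolding x by (simp add: field_simps)
  then show "x / (1 - x * g / (1 - g)) = v / (1 + v) * ((1 - v\<^sup>2 * p) / (1 - v^3 * p))"
    unfolding a_def d_def e_def .
qed

definition vser_inv :: "'a::field fps" where
  "vser_inv = fps_X / (1 + fps_X + fps_X\<^sup>2)"

lemma vser_inv_eq_mult_inverse: "vser_inv = fps_X * inverse (1 + fps_X + fps_X\<^sup>2)"
  unfolding vser_inv_def by (simp add: fps_divide_unit power2_eq_square)

lemma vser_inv_compose:
  fixes v :: "'a::field fps"
  assumes v0: "v $ 0 = 0"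
  shows "vser_inv oo v = v / (1 + v + v\<^sup>2)"
proof -
  have unit: "(1 + fps_X + fps_X\<^sup>2 :: 'a fps) $ 0 \<noteq> 0" by (simp add: power2_eq_square)
  have "vser_inv oo v = (fps_X oo v) * (inverse (1 + fps_X + fps_X\<^sup>2) oo v)"
    unfolding vser_inv_eq_mult_inverse by (rule fps_compose_mult_distrib[OF v0])
  also have "\<dots> = v * inverse ((1 + fps_X + fps_X\<^sup>2) oo v)"
    using v0 unit by (simp add: fps_inverse_compose)
  also have "(1 + fps_X + fps_X\<^sup>2) oo v = 1 + v + v\<^sup>2"
    using v0 by (simp add: fps_compose_add_distrib fps_X_power_compose)
  finally show ?thesis using v0 by (simp add: fps_divide_unit power2_eq_square)
qed

lemma vser_inv_nth_0 [simp]: "vser_inv $ 0 = (0 :: 'a::field)"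
  and vser_inv_nth_1 [simp]: "vser_inv $ Suc 0 = (1 :: 'a::field)"
  by (simp_all add: vser_inv_eq_mult_inverse power2_eq_square)

lemma vser_eq_fps_inv: "vser = fps_inv vser_inv"
proof -
  let ?w = "fps_inv vser_inv :: real fps"
  have w0: "?w $ 0 = 0" by (simp add: fps_inv_def)
  have unique: "v = ?w" if "v $ 0 = 0 \<and> fps_X = v / (1 + v + v\<^sup>2)" for v
  proof -
    from that have v0: "v $ 0 = 0" and "vser_inv oo v = fps_X"
      using vser_inv_compose by metis+
    then have "?w = ?w oo (vser_inv oo v)"
      by simp
    also have "\<dots> = (?w oo vser_inv) oo v"
      using v0 vser_inv_nth_0 by (simp add: fps_compose_assoc)
    also have "\<dots> = v"
      using v0 by (simp add: fps_inv)
    finally show ?thesis by simp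
  qed
  have "?w $ 0 = 0 \<and> fps_X = ?w / (1 + ?w + ?w\<^sup>2)"
    using w0 vser_inv_compose[OF w0] by (simp add: fps_inv_right)
  then show ?thesis
    unfolding vser_def using unique by (rule the_equality)
qed

lemma vser_nth_0 [simp]: "vser $ 0 = 0"
  by (simp add: vser_eq_fps_inv fps_inv_def)

lemma fps_X_eq_vser: "fps_X = vser / (1 + vser + vser\<^sup>2)"
proof -
  have "fps_X = vser_inv oo vser"
    by (simp add: vser_eq_fps_inv fps_inv_right)
  then show ?thesis
    using vser_inv_compose[OF vser_nth_0] by simp
qed

lemma Fser_0: "Fser 0 = 0"
  by (simp add: Fser_def)

(* Thanks to the filler value Gser 0 = 0 this also holds for k = 0. *)
lemma Gser_Suc: "Gser (Suc k) = fps_X / (1 - Fser k)"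
  by (cases k) (simp_all add: Fser_def)

lemma Gser_nth_0 [simp]: "Gser k $ 0 = 0"
proof (induction k)
  case (Suc k)
  then have "(1 - Fser k) $ 0 = 1"
    by (simp add: Fser_def fps_divide_unit)
  then show ?case
    by (simp add: Gser_Suc fps_divide_unit)
qed simp

abbreviation vfls :: "real fls" where "vfls \<equiv> fps_to_fls vser"

lemma fps_to_fls_neq_0: "f $ 0 \<noteq> 0 \<Longrightarrow> fps_to_fls f \<noteq> 0"
  by (metis fps_nonzeroI fps_to_fls_eq_0_iff)

lemma vser_units:
  "(1 + vser) $ 0 \<noteq> 0" "(1 + vser + vser\<^sup>2) $ 0 \<noteq> 0" "n > 0 \<Longrightarrow> (1 - vser ^ n) $ 0 \<noteq> 0"
  by (simp_all add: fps_nth_power_0 power2_eq_square zero_power)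

lemma vfls_neq_0:
  "1 + vfls \<noteq> 0" "1 + vfls + vfls\<^sup>2 \<noteq> 0" "n > 0 \<Longrightarrow> 1 - vfls ^ n \<noteq> 0"
  using fps_to_fls_neq_0[OF vser_units(1)] fps_to_fls_neq_0[OF vser_units(2)]
    fps_to_fls_neq_0[OF vser_units(3)]
  by (simp_all add: fps_to_fls_power)

lemma fls_X_eq_vfls: "fls_X = vfls / (1 + vfls + vfls\<^sup>2)"
  using arg_cong[OF fps_X_eq_vser, of fps_to_fls]
  by (simp add: fps_to_fls_divide_unit fps_to_fls_power fps_nth_power_0)

lemma fps_to_fls_Fser: "fps_to_fls (Fser k) = fls_X * fps_to_fls (Gser k) / (1 - fps_to_fls (Gser k))"
  by (simp add: Fser_def fps_to_fls_divide_unit fls_times_fps_to_fls)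

lemma fps_to_fls_Gser_closed_form:
  "fps_to_fls (Gser k) = vfls / (1 + vfls) * ((1 - vfls ^ (2*k)) / (1 - vfls ^ (2*k+1)))"
proof (induction k)
  case (Suc k)
  let ?p = "vfls ^ (2*k)"
  have IH: "fps_to_fls (Gser k) = vfls / (1 + vfls) * ((1 - ?p) / (1 - vfls * ?p))"
    using Suc.IH by simp
  have pow: "vfls * ?p = vfls ^ (2*k+1)" "vfls\<^sup>2 * ?p = vfls ^ (2*k+2)" "vfls ^ 3 * ?p = vfls ^ (2*k+3)"
    by (simp_all add: power_add power2_eq_square power3_eq_cube ac_simps)
  have "fps_to_fls (Gser (Suc k)) = fls_X / (1 - fps_to_fls (Fser k))"
    by (simp add: Gser_Suc fps_to_fls_divide_unit Fser_def)
  also have "\<dots> = vfls / (1 + vfls) * ((1 - vfls ^ (2*k+2)) / (1 - vfls ^ (2*k+3)))"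
    unfolding fps_to_fls_Fser IH fls_X_eq_vfls pow[symmetric]
    by (rule motzkin_step(2)) (use vfls_neq_0 in \<open>auto simp only: pow\<close>)
  moreover have "2 * Suc k = 2*k+2" "2 * Suc k + 1 = 2*k+3"
    by simp_all
  ultimately show ?case
    by (simp only:)
qed simp

lemma fps_to_fls_Fser_closed_form:
  "fps_to_fls (Fser k) = vfls\<^sup>2 / (1 + vfls + vfls\<^sup>2) * ((1 - vfls ^ (2*k)) / (1 - vfls ^ (2*k+2)))"
proof -
  let ?p = "vfls ^ (2*k)"
  have pow: "vfls * ?p = vfls ^ (2*k+1)" "vfls\<^sup>2 * ?p = vfls ^ (2*k+2)" "vfls ^ 3 * ?p = vfls ^ (2*k+3)"
    by (simp_all add: power_add power2_eq_square power3_eq_cube ac_simps)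
  show ?thesis
    unfolding fps_to_fls_Fser fps_to_fls_Gser_closed_form fls_X_eq_vfls pow[symmetric]
    by (rule motzkin_step(1)) (use vfls_neq_0 in \<open>auto simp only: pow\<close>)
qed

lemmas fps_to_fls_simps = fls_times_fps_to_fls fps_to_fls_divide_unit fps_to_fls_minus fps_to_fls_plus
  fps_one_to_fls fps_to_fls_power

lemma Gser_closed_form:
  "Gser k = vser / (1 + vser) * ((1 - vser ^ (2*k)) / (1 - vser ^ (2*k+1)))" (is "_ = ?rhs")
proof -
  have "fps_to_fls ?rhs = fps_to_fls (Gser k)"
    unfolding fps_to_fls_Gser_closed_form
    by (simp only: fps_to_fls_simps vser_units not_False_eq_True zero_less_Suc
        Suc_eq_plus1[symmetric])
  then show ?thesis
    by simp
qed

lemma Fser_closed_form: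
  "Fser k = vser\<^sup>2 / (1 + vser + vser\<^sup>2) * ((1 - vser ^ (2*k)) / (1 - vser ^ (2*k+2)))"
  (is "_ = ?rhs")
proof -
  have "fps_to_fls ?rhs = fps_to_fls (Fser k)"
    unfolding fps_to_fls_Fser_closed_form
    by (simp only: fps_to_fls_simps vser_units not_False_eq_True zero_less_Suc add_2_eq_Suc')
  then show ?thesis
    by simp
qed

lemma nodes_neq_0 [simp]: "nodes t \<noteq> 0"
  by (cases t) simp

lemma length_le_sum_nodes: "length ts \<le> sum_list (map nodes ts)"
proof (induction ts)
  case (Cons t ts)
  then show ?case using nodes_neq_0[of t] by (simp only: list.map sum_list.Cons list.size)
qed simp

lemma finite_nodes_le: "finite {t. nodes t \<le> n}"
proof (induction n)
  case (Suc n)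
  let ?lists = "{ts. set ts \<subseteq> {t. nodes t \<le> n} \<and> length ts \<le> n}"
  have "{t. nodes t \<le> Suc n} \<subseteq> Node ` ?lists"
  proof
    fix t assume "t \<in> {t. nodes t \<le> Suc n}"
    then obtain ts where t: "t = Node ts" and sum: "sum_list (map nodes ts) \<le> n"
      by (cases t) auto
    have "set ts \<subseteq> {t. nodes t \<le> n}"
      using sum member_le_sum_list[of _ "map nodes ts"] by fastforce
    with t sum length_le_sum_nodes[of ts] show "t \<in> Node ` ?lists"
      by force
  qed
  then show ?case
    using finite_lists_length_le[OF Suc.IH] finite_subset by blast
qed simp

lemma finite_nodes_eq: "finite {t \<in> S. nodes t = n}"
  by (rule finite_subset[OF _ finite_nodes_le[of n]]) auto

definition forests :: "ptree set \<Rightarrow> nat \<Rightarrow> ptree list set" where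
  "forests S n = {ts. set ts \<subseteq> S \<and> sum_list (map nodes ts) = n}"

lemma finite_forests: "finite (forests S n)"
proof (rule finite_subset[OF _ finite_lists_length_le[OF finite_nodes_le[of n], of n]])
  show "forests S n \<subseteq> {ts. set ts \<subseteq> {t. nodes t \<le> n} \<and> length ts \<le> n}"
    unfolding forests_def using member_le_sum_list[of _ "map nodes _"] length_le_sum_nodes
    by fastforce
qed

lemma forests_0: "forests S 0 = {[]}"
  unfolding forests_def by (auto simp: sum_list_eq_0_iff)

lemma card_forests:
  assumes "n > 0"
  shows "card (forests S n) = (\<Sum>j\<le>n. card {t \<in> S. nodes t = j} * card (forests S (n - j)))"
proof -
  let ?A = "SIGMA j:{..n}. {t \<in> S. nodes t = j} \<times> forests S (n - j)"
  let ?cons = "\<lambda>(j::nat, t, ts). t # ts"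
  have "inj_on ?cons ?A"
    by (auto simp: inj_on_def)
  moreover have "?cons ` ?A = forests S n"
  proof
    show "?cons ` ?A \<subseteq> forests S n"
      by (auto simp: forests_def)
    show "forests S n \<subseteq> ?cons ` ?A"
    proof
      fix ts assume ts: "ts \<in> forests S n"
      then obtain t ts' where "ts = t # ts'"
        using assms by (cases ts) (auto simp: forests_def)
      with ts have "(nodes t, t, ts') \<in> ?A" and "ts = ?cons (nodes t, t, ts')"
        by (auto simp: forests_def)
      then show "ts \<in> ?cons ` ?A" by blast
    qed
  qed
  ultimately have "card (forests S n) = card ?A"
    using card_image by fastforce
  also have "\<dots> = (\<Sum>j\<le>n. card {t \<in> S. nodes t = j} * card (forests S (n - j)))"
    by (subst card_SigmaI) (simp_all add: finite_nodes_eq finite_forests card_cartesian_product)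
  finally show ?thesis .
qed

lemma card_forests_minus_Nil: "card (forests S n - {[]}) = (if n = 0 then 0 else card (forests S n))"
proof (cases "n = 0")
  case False
  then have "[] \<notin> forests S n"
    by (simp add: forests_def)
  with False show ?thesis
    by simp
qed (simp add: forests_0)

definition tree_gf :: "ptree set \<Rightarrow> real fps" where
  "tree_gf S = Abs_fps (\<lambda>n. real (card {t \<in> S. nodes t = n}))"

definition forest_gf :: "ptree set \<Rightarrow> real fps" where
  "forest_gf S = Abs_fps (\<lambda>n. real (card (forests S n)))"

lemma tree_gf_nth_0 [simp]: "tree_gf S $ 0 = 0"
  by (simp add: tree_gf_def less_not_refl2)

lemma forest_gf_eq: "forest_gf S = 1 + tree_gf S * forest_gf S"
proof (rule fps_ext)
  fix n
  show "forest_gf S $ n = (1 + tree_gf S * forest_gf S) $ n"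
    by (cases "n = 0")
      (simp_all add: forest_gf_def tree_gf_def forests_0 fps_mult_nth card_forests of_nat_sum atLeast0AtMost)
qed

lemma forest_gf_eq_divide: "forest_gf S = 1 / (1 - tree_gf S)"
proof -
  have "(1 - tree_gf S) * forest_gf S = 1"
    using forest_gf_eq[of S] by (simp add: algebra_simps)
  then show ?thesis
    by (simp add: fps_divide_unit fps_inverse_unique)
qed

lemma odd_leaves_Suc_Suc: "odd_leaves (Suc (Suc d)) t = odd_leaves d t"
  by (induction d t rule: odd_leaves.induct) (auto simp: list_all_iff)

lemma odd_leaves_0_Node:
  "odd_leaves 0 (Node ts) \<longleftrightarrow> ts \<noteq> [] \<and> (\<forall>t\<in>set ts. odd_leaves (Suc 0) t)"
  by (auto simp: list_all_iff)

lemma odd_leaves_1_Node: "odd_leaves (Suc 0) (Node ts) \<longleftrightarrow> (\<forall>t\<in>set ts. odd_leaves 0 t)"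
  by (auto simp: list_all_iff odd_leaves_Suc_Suc)

lemma height_Node_less_Suc: "height (Node ts) < Suc h \<longleftrightarrow> (\<forall>t\<in>set ts. height t < h)"
  by (cases "ts = []") (auto simp: Max_less_iff)

lemma two_le_nodes_if_odd_leaves_0: "odd_leaves 0 t \<Longrightarrow> 2 \<le> nodes t"
proof (cases t)
  case (Node ts)
  moreover assume "odd_leaves 0 t"
  ultimately obtain t' ts' where "ts = t' # ts'"
    by (cases ts) auto
  with Node have "nodes t = Suc (nodes t' + sum_list (map nodes ts'))"
    by simp
  moreover have "nodes t' \<noteq> 0"
    by simp
  ultimately show ?thesis
    by arith
qed

definition odd_leaf_trees :: "nat \<Rightarrow> ptree set" where
  "odd_leaf_trees h = {t. odd_leaves 0 t \<and> height t < h}"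

(* Counting the root as depth 1 makes the leaves lie at even depth below it. *)
definition even_leaf_trees :: "nat \<Rightarrow> ptree set" where
  "even_leaf_trees h = {t. odd_leaves (Suc 0) t \<and> height t < h}"

lemma odd_leaf_trees_0: "odd_leaf_trees 0 = {}"
  by (simp add: odd_leaf_trees_def)

lemma even_leaf_trees_Suc_nodes_Suc:
  "{t \<in> even_leaf_trees (Suc h). nodes t = Suc n} = Node ` forests (odd_leaf_trees h) n"
proof -
  have "t \<in> {t \<in> even_leaf_trees (Suc h). nodes t = Suc n}
        \<longleftrightarrow> (\<exists>ts. t = Node ts \<and> ts \<in> forests (odd_leaf_trees h) n)" for t
    by (cases t) (auto simp: even_leaf_trees_def odd_leaf_trees_def forests_def odd_leaves_1_Node
        height_Node_less_Suc simp del: odd_leaves.simps height.simps)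
  then show ?thesis
    by blast
qed

lemma odd_leaf_trees_Suc_nodes_Suc:
  "{t \<in> odd_leaf_trees (Suc h). nodes t = Suc n} = Node ` (forests (even_leaf_trees h) n - {[]})"
proof -
  have "t \<in> {t \<in> odd_leaf_trees (Suc h). nodes t = Suc n}
        \<longleftrightarrow> (\<exists>ts. t = Node ts \<and> ts \<in> forests (even_leaf_trees h) n - {[]})" for t
    by (cases t) (auto simp: even_leaf_trees_def odd_leaf_trees_def forests_def odd_leaves_0_Node
        height_Node_less_Suc simp del: odd_leaves.simps height.simps)
  then show ?thesis
    by blast
qed

lemma inj_on_Node: "inj_on Node A"
  by (simp add: inj_on_def)

lemma tree_gf_even_leaf_trees_Suc:
  "tree_gf (even_leaf_trees (Suc h)) = fps_X / (1 - tree_gf (odd_leaf_trees h))"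
proof -
  have "tree_gf (even_leaf_trees (Suc h)) = fps_X * forest_gf (odd_leaf_trees h)"
  proof (rule fps_ext)
    fix n
    show "tree_gf (even_leaf_trees (Suc h)) $ n = (fps_X * forest_gf (odd_leaf_trees h)) $ n"
      by (cases n) (simp_all add: tree_gf_def forest_gf_def even_leaf_trees_Suc_nodes_Suc
          card_image[OF inj_on_Node])
  qed
  then show ?thesis
    by (simp add: forest_gf_eq_divide fps_divide_unit)
qed

lemma tree_gf_odd_leaf_trees_Suc:
  fixes h :: nat
  defines "g \<equiv> tree_gf (even_leaf_trees h)"
  shows "tree_gf (odd_leaf_trees (Suc h)) = fps_X * g / (1 - g)"
proof -
  have "tree_gf (odd_leaf_trees (Suc h)) = fps_X * (forest_gf (even_leaf_trees h) - 1)"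
  proof (rule fps_ext)
    fix n
    show "tree_gf (odd_leaf_trees (Suc h)) $ n = (fps_X * (forest_gf (even_leaf_trees h) - 1)) $ n"
      by (cases n) (simp_all add: tree_gf_def forest_gf_def odd_leaf_trees_Suc_nodes_Suc
          card_image[OF inj_on_Node] card_forests_minus_Nil forests_0)
  qed
  also have "forest_gf (even_leaf_trees h) - 1 = g * forest_gf (even_leaf_trees h)"
    unfolding g_def by (subst forest_gf_eq) simp
  finally show ?thesis
    by (simp add: forest_gf_eq_divide fps_divide_unit g_def mult.assoc)
qed

lemma Fser_eq_tree_gf: "Fser k = tree_gf (odd_leaf_trees (2*k))"
proof (induction k)
  case 0
  show ?case
    by (simp add: Fser_0 odd_leaf_trees_0 tree_gf_def fps_zero_def)
next
  case (Suc k)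
  have "Gser (Suc k) = tree_gf (even_leaf_trees (Suc (2*k)))"
    by (simp add: Gser_Suc Suc.IH tree_gf_even_leaf_trees_Suc)
  then show ?case
    by (simp add: Fser_def tree_gf_odd_leaf_trees_Suc)
qed

theorem mainTheorem2:
  fixes k :: nat
  assumes "k \<ge> 1"
  shows "Gser k = (vser / (1 + vser)) * ((1 - vser ^ (2*k)) / (1 - vser ^ (2*k+1)))
       \<and> Fser k = (vser\<^sup>2 / (1 + vser + vser\<^sup>2)) * ((1 - vser ^ (2*k)) / (1 - vser ^ (2*k+2)))
       \<and> Fser k = Abs_fps (\<lambda>n. real (card {t. nodes t = n \<and> 2 \<le> nodes t \<and> odd_leaves 0 t
                                                \<and> height t \<le> 2*k - 1}))"
proof -
  have "{t. nodes t = n \<and> 2 \<le> nodes t \<and> odd_leaves 0 t \<and> height t \<le> 2*k - 1}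
      = {t \<in> odd_leaf_trees (2*k). nodes t = n}" for n
    using assms two_le_nodes_if_odd_leaves_0 by (auto simp: odd_leaf_trees_def)
  then show ?thesis
    using Gser_closed_form Fser_closed_form Fser_eq_tree_gf by (simp add: tree_gf_def)
qed

end
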